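(* The Banach lattice $\ell_\infty$ does not have the unbounded Grothendieck property.
   Context: For a Banach lattice $E$ with dual $E'$, a sequence $(x_n')\subseteq E'$ is unbounded weak$^*$ convergent to $0$ (written $x_n'\xrightarrow{uaw^*}0$) if $|x_n'|\wedge u'\to 0$ in the weak$^*$ topology $\sigma(E',E)$ for every $u'\in E'_+$. $E$ has the unbounded Grothendieck property if every norm bounded sequence $(x_n')\subseteq E'$ with $x_n'\xrightarrow{uaw^*}0$ converges to $0$ weakly (in $\sigma(E',E'')$). *)

theory Defs
  imports "HOL-Analysis.Analysis"
begin

text \<open>The order on l_infinity is pointwise; the lattice
operations on the dual are given by the Riesz--Kantorovich formulas, evaluated on
positive elements and extended linearly via x = x^+ - x^-.\<close>

type_synonym linf = "nat \<Rightarrow>\<^sub>C real"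
type_synonym linf_dual = "linf \<Rightarrow>\<^sub>L real"
type_synonym linf_bidual = "linf_dual \<Rightarrow>\<^sub>L real"

definition linf_le :: "linf \<Rightarrow> linf \<Rightarrow> bool" where
  "linf_le x y \<longleftrightarrow> (\<forall>i. apply_bcontfun x i \<le> apply_bcontfun y i)"

definition linf_pos_part :: "linf \<Rightarrow> linf" where
  "linf_pos_part x = Bcontfun (\<lambda>i. max (apply_bcontfun x i) 0)"

definition linf_neg_part :: "linf \<Rightarrow> linf" where
  "linf_neg_part x = Bcontfun (\<lambda>i. max (- apply_bcontfun x i) 0)"

definition dual_positive :: "linf_dual \<Rightarrow> bool" where
  "dual_positive u \<longleftrightarrow> (\<forall>x. linf_le 0 x \<longrightarrow> 0 \<le> blinfun_apply u x)"

definition dual_abs_pos :: "linf_dual \<Rightarrow> linf \<Rightarrow> real" where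
  "dual_abs_pos f x = (SUP y\<in>{y. \<forall>i. \<bar>apply_bcontfun y i\<bar> \<le> apply_bcontfun x i}. \<bar>blinfun_apply f y\<bar>)"

definition dual_absinf_pos :: "linf_dual \<Rightarrow> linf_dual \<Rightarrow> linf \<Rightarrow> real" where
  "dual_absinf_pos f u x =
     (INF y\<in>{y. linf_le 0 y \<and> linf_le y x}. dual_abs_pos f y + blinfun_apply u (x - y))"

definition dual_absinf :: "linf_dual \<Rightarrow> linf_dual \<Rightarrow> linf \<Rightarrow> real" where
  "dual_absinf f u x = dual_absinf_pos f u (linf_pos_part x) - dual_absinf_pos f u (linf_neg_part x)"

definition uaw_star_null :: "(nat \<Rightarrow> linf_dual) \<Rightarrow> bool" where
  "uaw_star_null xs \<longleftrightarrow>
     (\<forall>u. dual_positive u \<longrightarrow> (\<forall>x. (\<lambda>n. dual_absinf (xs n) u x) \<longlonglongrightarrow> 0))"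

definition weakly_null :: "(nat \<Rightarrow> linf_dual) \<Rightarrow> bool" where
  "weakly_null xs \<longleftrightarrow> (\<forall>\<phi> :: linf_bidual. (\<lambda>n. blinfun_apply \<phi> (xs n)) \<longlonglongrightarrow> 0)"

definition linf_unbounded_Grothendieck :: bool where
  "linf_unbounded_Grothendieck \<longleftrightarrow>
     (\<forall>xs. bounded (range xs) \<longrightarrow> uaw_star_null xs \<longrightarrow> weakly_null xs)"

end

theory Submission
  imports Defs
begin

text \<open>The coordinate functionals \<open>\<delta>\<^sub>n\<close> on \<open>\<ell>\<^sub>\<infinity>\<close> have norm at most 1 and are not weakly null,
  since the bidual element "evaluation at the constant sequence 1" sends each of them to 1.
  They are nevertheless uaw*-null: for \<open>x \<ge> 0\<close> the infimum defining \<open>(|\<delta>\<^sub>n| \<and> u)(x)\<close> is at most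
  \<open>x\<^sub>n u(e\<^sub>n)\<close> (take \<open>y = x - x\<^sub>n e\<^sub>n\<close>), and for positive \<open>u\<close> the series \<open>\<Sum> u(e\<^sub>n)\<close> converges, being
  bounded by \<open>u(1)\<close>, so \<open>u(e\<^sub>n) \<rightarrow> 0\<close>.\<close>

lemma apply_bcontfun_Bcontfun_discrete:
  fixes g :: "'a::discrete_topology \<Rightarrow> 'b::real_normed_vector"
  assumes "\<And>x. norm (g x) \<le> B"
  shows "apply_bcontfun (Bcontfun g) = g"
  using bcontfun_normI[of g B] assms by (simp add: Bcontfun_inverse)

lemma abs_apply_linf_le_norm: "\<bar>apply_bcontfun (x::linf) i\<bar> \<le> norm x"
  using norm_bounded[of x i] by simp

lemma linf_pos_part_apply [simp]:
  "apply_bcontfun (linf_pos_part x) i = max (apply_bcontfun x i) 0"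
  unfolding linf_pos_part_def
  by (subst apply_bcontfun_Bcontfun_discrete[where B="norm x"])
     (use abs_apply_linf_le_norm[of x] in \<open>auto simp: abs_le_iff\<close>)

lemma linf_neg_part_apply [simp]:
  "apply_bcontfun (linf_neg_part x) i = max (- apply_bcontfun x i) 0"
  unfolding linf_neg_part_def
  by (subst apply_bcontfun_Bcontfun_discrete[where B="norm x"])
     (use abs_apply_linf_le_norm[of x] in \<open>auto simp: abs_le_iff\<close>)

lemma linf_pos_part_nonneg: "linf_le 0 (linf_pos_part x)"
  and linf_neg_part_nonneg: "linf_le 0 (linf_neg_part x)"
  by (simp_all add: linf_le_def)

definition linf_unit :: "nat \<Rightarrow> linf" where
  "linf_unit n = Bcontfun (\<lambda>i. if i = n then 1 else 0)"

lemma linf_unit_apply [simp]: "apply_bcontfun (linf_unit n) i = (if i = n then 1 else 0)"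
  unfolding linf_unit_def by (subst apply_bcontfun_Bcontfun_discrete[where B=1]) auto

lemma sum_linf_unit_apply_le_1: "apply_bcontfun (\<Sum>k<N. linf_unit k) i \<le> 1"
proof -
  have "apply_bcontfun (\<Sum>k<N. linf_unit k) i = (\<Sum>k<N. if i = k then 1 else 0)"
    by (induction N) auto
  also have "\<dots> \<le> 1"
    by (simp add: sum.If_cases)
  finally show ?thesis .
qed

definition linf_coord :: "nat \<Rightarrow> linf_dual" where
  "linf_coord n = Blinfun (\<lambda>x. apply_bcontfun x n)"

lemma linf_coord_apply [simp]: "blinfun_apply (linf_coord n) x = apply_bcontfun x n"
proof -
  have "bounded_linear (\<lambda>x::linf. apply_bcontfun x n)"
    by (rule bounded_linear_intro[where K=1]) (use abs_apply_linf_le_norm in auto)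
  then show ?thesis
    by (simp add: linf_coord_def bounded_linear_Blinfun_apply)
qed

lemma norm_linf_coord_le_1: "norm (linf_coord n) \<le> 1"
  by (rule norm_blinfun_bound) (use abs_apply_linf_le_norm in auto)

lemma dual_positive_mono:
  assumes "dual_positive u" and "linf_le x y"
  shows "blinfun_apply u x \<le> blinfun_apply u y"
proof -
  have "0 \<le> blinfun_apply u (y - x)"
    using assms unfolding dual_positive_def linf_le_def by auto
  then show ?thesis
    by (simp add: blinfun.diff_right)
qed

lemma dual_positive_linf_unit_nonneg: "dual_positive u \<Longrightarrow> 0 \<le> blinfun_apply u (linf_unit n)"
  unfolding dual_positive_def linf_le_def by auto

lemma dual_positive_linf_unit_summable:
  assumes "dual_positive u"
  shows "summable (\<lambda>n. blinfun_apply u (linf_unit n))"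
proof (rule summableI_nonneg_bounded)
  show "0 \<le> blinfun_apply u (linf_unit n)" for n
    using dual_positive_linf_unit_nonneg[OF assms] .
  show "(\<Sum>k<N. blinfun_apply u (linf_unit k)) \<le> blinfun_apply u (const_bcontfun 1)" for N
  proof -
    have "(\<Sum>k<N. blinfun_apply u (linf_unit k)) = blinfun_apply u (\<Sum>k<N. linf_unit k)"
      by (simp add: blinfun.sum_right)
    also have "\<dots> \<le> blinfun_apply u (const_bcontfun 1)"
      using assms sum_linf_unit_apply_le_1 by (auto intro: dual_positive_mono simp: linf_le_def)
    finally show ?thesis .
  qed
qed

lemma dual_abs_pos_linf_coord:
  assumes "linf_le 0 y"
  shows "dual_abs_pos (linf_coord n) y = apply_bcontfun y n"
proof -
  let ?S = "{w::linf. \<forall>i. \<bar>apply_bcontfun w i\<bar> \<le> apply_bcontfun y i}"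
  have y_in_S: "y \<in> ?S"
    using assms by (auto simp: linf_le_def)
  have "(SUP w\<in>?S. \<bar>apply_bcontfun w n\<bar>) = apply_bcontfun y n"
  proof (rule antisym)
    show "(SUP w\<in>?S. \<bar>apply_bcontfun w n\<bar>) \<le> apply_bcontfun y n"
      by (rule cSUP_least) (use y_in_S in blast, auto)
    have "bdd_above ((\<lambda>w. \<bar>apply_bcontfun w n\<bar>) ` ?S)"
      by (rule bdd_aboveI[where M="apply_bcontfun y n"]) auto
    then show "apply_bcontfun y n \<le> (SUP w\<in>?S. \<bar>apply_bcontfun w n\<bar>)"
      using cSUP_upper[OF y_in_S] by fastforce
  qed
  then show ?thesis
    by (simp add: dual_abs_pos_def)
qed

lemma dual_absinf_pos_linf_coord_bounds:
  assumes u: "dual_positive u" and x: "linf_le 0 x"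
  shows "0 \<le> dual_absinf_pos (linf_coord n) u x"
    and "dual_absinf_pos (linf_coord n) u x \<le> norm x * blinfun_apply u (linf_unit n)"
proof -
  let ?T = "{y. linf_le 0 y \<and> linf_le y x}"
  let ?f = "\<lambda>y. dual_abs_pos (linf_coord n) y + blinfun_apply u (x - y)"
  have f_nonneg: "0 \<le> ?f y" if "y \<in> ?T" for y
  proof -
    have "0 \<le> blinfun_apply u (x - y)"
      using that u unfolding dual_positive_def linf_le_def by auto
    with that show ?thesis
      by (auto simp: dual_abs_pos_linf_coord linf_le_def)
  qed
  have "0 \<in> ?T"
    using x by (simp add: linf_le_def)
  then show "0 \<le> dual_absinf_pos (linf_coord n) u x"
    unfolding dual_absinf_pos_def using f_nonneg by (intro cINF_greatest) auto
  define y where "y = Bcontfun (\<lambda>i. if i = n then 0 else apply_bcontfun x i)"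
  have y_apply: "apply_bcontfun y i = (if i = n then 0 else apply_bcontfun x i)" for i
    unfolding y_def
    by (subst apply_bcontfun_Bcontfun_discrete[where B="norm x"])
       (use abs_apply_linf_le_norm in auto)
  have y_in_T: "y \<in> ?T"
    using x by (auto simp: linf_le_def y_apply)
  have "x - y = apply_bcontfun x n *\<^sub>R linf_unit n"
    by (rule bcontfun_eqI) (auto simp: y_apply)
  moreover have "dual_abs_pos (linf_coord n) y = 0"
    using y_in_T by (simp add: dual_abs_pos_linf_coord y_apply)
  ultimately have f_y: "?f y = apply_bcontfun x n * blinfun_apply u (linf_unit n)"
    by (simp add: blinfun.scaleR_right)
  have "dual_absinf_pos (linf_coord n) u x \<le> ?f y"
    unfolding dual_absinf_pos_def
    using y_in_T f_nonneg by (intro cINF_lower bdd_belowI[where m=0]) auto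
  also have "\<dots> \<le> norm x * blinfun_apply u (linf_unit n)"
    unfolding f_y using abs_apply_linf_le_norm[of x n] dual_positive_linf_unit_nonneg[OF u]
    by (intro mult_right_mono) auto
  finally show "dual_absinf_pos (linf_coord n) u x \<le> norm x * blinfun_apply u (linf_unit n)" .
qed

lemma uaw_star_null_linf_coord: "uaw_star_null linf_coord"
  unfolding uaw_star_null_def
proof (intro allI impI)
  fix u x
  assume u: "dual_positive u"
  let ?p = "linf_pos_part x" and ?q = "linf_neg_part x"
  have bound: "\<bar>dual_absinf (linf_coord n) u x\<bar> \<le> (norm ?p + norm ?q) * blinfun_apply u (linf_unit n)"
    for n
  proof -
    have abs_diff_le: "\<bar>a - b\<bar> \<le> A + B" if "0 \<le> a" "a \<le> A" "0 \<le> b" "b \<le> B"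
      for a b A B :: real
      using that by linarith
    show ?thesis
      unfolding dual_absinf_def distrib_right
      using dual_absinf_pos_linf_coord_bounds[OF u linf_pos_part_nonneg]
        dual_absinf_pos_linf_coord_bounds[OF u linf_neg_part_nonneg]
      by (intro abs_diff_le)
  qed
  have majorant_tendsto: "(\<lambda>n. (norm ?p + norm ?q) * blinfun_apply u (linf_unit n)) \<longlonglongrightarrow> 0"
    using summable_LIMSEQ_zero[OF dual_positive_linf_unit_summable[OF u]]
    by (rule tendsto_mult_right_zero)
  show "(\<lambda>n. dual_absinf (linf_coord n) u x) \<longlonglongrightarrow> 0"
    by (rule Lim_null_comparison[OF always_eventually majorant_tendsto]) (simp add: bound)
qed

lemma not_weakly_null_linf_coord: "\<not> weakly_null linf_coord"
proof
  define eval_1 :: linf_bidual where "eval_1 = Blinfun (\<lambda>f. blinfun_apply f (const_bcontfun 1))"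
  assume "weakly_null linf_coord"
  then have "(\<lambda>n. blinfun_apply eval_1 (linf_coord n)) \<longlonglongrightarrow> 0"
    unfolding weakly_null_def by blast
  then have "(\<lambda>n. 1::real) \<longlonglongrightarrow> 0"
    by (simp add: eval_1_def bounded_linear_Blinfun_apply)
  then show False
    by (simp add: LIMSEQ_const_iff)
qed

theorem lemma2p3:
  shows "\<not> linf_unbounded_Grothendieck"
proof -
  have "bounded (range linf_coord)"
    using norm_linf_coord_le_1 by (intro boundedI[where B=1]) auto
  then show ?thesis
    unfolding linf_unbounded_Grothendieck_def
    using uaw_star_null_linf_coord not_weakly_null_linf_coord by blast
qed

end
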